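(* Suppose Assumptions (A1), (A2), (A3) hold and $\delta\in(0,a_0)$, where $a_0=\frac{1-e^{-\omega}}{2\sigma}$. Then there exists a unique $\mu_\infty\in\mathcal{P}_1(\mathbb{R}^d)$ with $\Psi(\mu_\infty)=\mu_\infty$. Moreover, for every $\gamma\in\mathcal{P}_1(\mathbb{R}^d)$, $$\limsup_{n\to\infty}\frac1n\log\mathcal{W}_1(\Psi^n(\gamma),\mu_\infty)<0 .$$
   Context: Fix integers $d,m\ge1$, a real $d\times d$ matrix $A$ with operator norm $\|A\|=\sup_{x\neq0}|Ax|/|x|$, $\delta>0$, a Borel probability measure $\theta$ on $\mathbb{R}^m$ and a measurable $f:\mathbb{R}^d\times\mathcal{P}_1(\mathbb{R}^d)\times\mathbb{R}^m\to\mathbb{R}^d$. $\mathcal{P}_1(\mathbb{R}^d)$ is the set of Borel probability measures on $\mathbb{R}^d$ with finite first moment, with the Wasserstein-1 distance $\mathcal{W}_1(\mu,\nu)=\inf E|X-Y|$ over couplings. For $\mu\in\mathcal{P}_1(\mathbb{R}^d)$, $\Psi(\mu)$ is the law of $AX+\delta f(X,\mu,\epsilon)$ where $(X,\epsilon)$ has law $\mu\otimes\theta$ (under (A1),(A2), $\Psi$ maps $\mathcal{P}_1(\mathbb{R}^d)$ into itself); $\Psi^n$ is the $n$-fold composition. Assumption (A1): $\sigma:=\int D(z)\theta(dz)<\infty$, where $D(z):=\sup\frac{|f(x_1,\mu_1,z)-f(x_2,\mu_2,z)|}{|x_1-x_2|+\mathcal{W}_1(\mu_1,\mu_2)}$,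 supremum over $(x_1,\mu_1)\neq(x_2,\mu_2)$. Assumption (A2): $\int D_1(z)\theta(dz)<\infty$, where $D_1(z)=|f(0,\delta_0,z)|$. Assumption (A3): $\|A\|\le e^{-\omega}$ for some $\omega>0$. *)

theory Defs
  imports "HOL-Probability.Probability"
begin

definition P1 :: "'a::euclidean_space measure set" where
  "P1 = {\<mu>. prob_space \<mu> \<and> sets \<mu> = sets borel \<and> (\<integral>\<^sup>+ x. ennreal (norm x) \<partial>\<mu>) < \<infinity>}"

definition couplings :: "'a::euclidean_space measure \<Rightarrow> 'a measure \<Rightarrow> ('a \<times> 'a) measure set" where
  "couplings \<mu> \<nu> = {\<pi>. prob_space \<pi> \<and> sets \<pi> = sets (borel \<Otimes>\<^sub>M borel)
      \<and> distr \<pi> borel fst = \<mu> \<and> distr \<pi> borel snd = \<nu>}"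

text \<open>Wasserstein-1 distance (finite on P1; real-valued).\<close>
definition W1 :: "'a::euclidean_space measure \<Rightarrow> 'a measure \<Rightarrow> real" where
  "W1 \<mu> \<nu> = enn2real (INF \<pi>\<in>couplings \<mu> \<nu>. \<integral>\<^sup>+ p. ennreal (dist (fst p) (snd p)) \<partial>\<pi>)"

definition Dlip :: "('a::euclidean_space \<Rightarrow> 'a measure \<Rightarrow> 'c \<Rightarrow> 'a) \<Rightarrow> 'c \<Rightarrow> ennreal" where
  "Dlip f z = (SUP p \<in> {((x1, \<mu>1), (x2, \<mu>2)). \<mu>1 \<in> P1 \<and> \<mu>2 \<in> P1 \<and> (x1, \<mu>1) \<noteq> (x2, \<mu>2)}.
      (case p of ((x1, \<mu>1), (x2, \<mu>2)) \<Rightarrow>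
        ennreal (dist (f x1 \<mu>1 z) (f x2 \<mu>2 z) / (dist x1 x2 + W1 \<mu>1 \<mu>2))))"

definition Psi :: "real^'d^'d \<Rightarrow> real \<Rightarrow> (real^'d \<Rightarrow> (real^'d) measure \<Rightarrow> 'c \<Rightarrow> real^'d)
     \<Rightarrow> 'c measure \<Rightarrow> (real^'d) measure \<Rightarrow> (real^'d) measure" where
  "Psi A \<delta> f \<theta> \<mu> = distr (\<mu> \<Otimes>\<^sub>M \<theta>) borel (\<lambda>(x, z). A *v x + \<delta> *\<^sub>R f x \<mu> z)"

definition log_rate :: "real \<Rightarrow> nat \<Rightarrow> ereal" where
  "log_rate w n = (if w = 0 then -\<infinity> else ereal (ln w / real n))"

end

theory Submission
  imports Defs
begin

text \<open>
  Realise \<open>\<Psi>\<close> on random variables. On the path space \<open>\<Omega> = \<rho> \<Otimes> \<theta>\<^sup>\<nat>\<close> let \<open>s\<close> drop the first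
  noise variable \<open>\<epsilon>\<^sub>0\<close> and put \<open>T X = A (X \<circ> s) + \<delta> f (X \<circ> s, law X, \<epsilon>\<^sub>0)\<close>. As \<open>\<epsilon>\<^sub>0\<close> is independent
  of \<open>X \<circ> s\<close>, which has the law of \<open>X\<close>, we get \<open>law (T X) = \<Psi> (law X)\<close>. Since
  \<open>W\<^sub>1 (law X) (law Y) \<le> E |X - Y|\<close>, the Lipschitz bound of (A1) makes \<open>T\<close> a contraction of \<open>L\<^sup>1(\<Omega>)\<close>
  with constant \<open>q = \<parallel>A\<parallel> + 2 \<delta> \<sigma> < 1\<close>. Iterating \<open>T\<close> from a random variable of law \<open>\<gamma>\<close> gives
  a sequence converging almost surely and in \<open>L\<^sup>1\<close> at rate \<open>q\<^sup>n\<close>; its limit has a \<open>\<Psi>\<close>-invariant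
  law \<open>\<mu>\<^sub>\<infinity>\<close> with \<open>W\<^sub>1 (\<Psi>\<^sup>n \<gamma>) \<mu>\<^sub>\<infinity> = O(q\<^sup>n)\<close>. Two invariant laws, realised independently on one
  path space, stay at distance at most \<open>q\<^sup>n E |X - Y|\<close> and therefore coincide.
\<close>

lemma P1D:
  assumes "\<mu> \<in> P1"
  shows "prob_space \<mu>" "sets \<mu> = sets borel" "(\<integral>\<^sup>+ x. ennreal (norm x) \<partial>\<mu>) < \<infinity>"
  using assms by (auto simp: P1_def)

lemma space_P1: "\<mu> \<in> P1 \<Longrightarrow> space \<mu> = UNIV"
  using sets_eq_imp_space_eq[of \<mu> borel] by (auto simp: P1_def)

lemma return_0_in_P1: "return borel (0::'a::euclidean_space) \<in> P1"
  by (auto simp: P1_def prob_space_return nn_integral_return)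

lemma distr_pair_snd_prob_space:
  assumes "prob_space M" "prob_space N"
  shows "distr (M \<Otimes>\<^sub>M N) N snd = N"
proof (intro measure_eqI)
  interpret M: prob_space M by fact
  interpret N: prob_space N by fact
  fix B assume B: "B \<in> sets (distr (M \<Otimes>\<^sub>M N) N snd)"
  then have "emeasure (distr (M \<Otimes>\<^sub>M N) N snd) B = emeasure (M \<Otimes>\<^sub>M N) (space M \<times> B)"
    by (auto simp: emeasure_distr space_pair_measure dest: sets.sets_into_space
        intro!: arg_cong2[where f=emeasure])
  also have "\<dots> = emeasure N B"
    using B by (simp add: N.emeasure_pair_measure_Times M.emeasure_space_1)
  finally show "emeasure (distr (M \<Otimes>\<^sub>M N) N snd) B = emeasure N B" .
qed simp

lemma P1_distr_pair_fst:
  assumes "\<mu> \<in> P1" "\<nu> \<in> P1"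
  shows "distr (\<mu> \<Otimes>\<^sub>M \<nu>) borel fst = \<mu>"
proof -
  interpret prob_space \<nu> using P1D(1)[OF assms(2)] .
  have "distr (\<mu> \<Otimes>\<^sub>M \<nu>) borel fst = distr (\<mu> \<Otimes>\<^sub>M \<nu>) \<mu> fst"
    using assms by (intro distr_cong) (auto simp: P1_def)
  also have "\<dots> = \<mu>" by (rule distr_pair_fst)
  finally show ?thesis .
qed

lemma P1_distr_pair_snd:
  assumes "\<mu> \<in> P1" "\<nu> \<in> P1"
  shows "distr (\<mu> \<Otimes>\<^sub>M \<nu>) borel snd = \<nu>"
proof -
  have "distr (\<mu> \<Otimes>\<^sub>M \<nu>) borel snd = distr (\<mu> \<Otimes>\<^sub>M \<nu>) \<nu> snd"
    using assms by (intro distr_cong) (auto simp: P1_def)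
  also have "\<dots> = \<nu>" by (intro distr_pair_snd_prob_space P1D(1) assms)
  finally show ?thesis .
qed

lemma (in prob_space) nn_integral_pair_fst:
  assumes [measurable]: "h \<in> borel_measurable N"
  shows "(\<integral>\<^sup>+p. h (fst p) \<partial>(N \<Otimes>\<^sub>M M)) = (\<integral>\<^sup>+x. h x \<partial>N)"
proof -
  have "(\<integral>\<^sup>+p. h (fst p) \<partial>(N \<Otimes>\<^sub>M M)) = (\<integral>\<^sup>+x. \<integral>\<^sup>+y. h x \<partial>M \<partial>N)"
    by (subst nn_integral_fst[symmetric]) auto
  also have "\<dots> = (\<integral>\<^sup>+x. h x \<partial>N)" by (simp add: emeasure_space_1)
  finally show ?thesis .
qed

lemma (in sigma_finite_measure) nn_integral_pair_mult:
  assumes [measurable]: "h \<in> borel_measurable N" "g \<in> borel_measurable M"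
  shows "(\<integral>\<^sup>+p. g (snd p) * h (fst p) \<partial>(N \<Otimes>\<^sub>M M)) = (\<integral>\<^sup>+y. g y \<partial>M) * (\<integral>\<^sup>+x. h x \<partial>N)"
proof -
  have "(\<integral>\<^sup>+p. g (snd p) * h (fst p) \<partial>(N \<Otimes>\<^sub>M M)) = (\<integral>\<^sup>+x. \<integral>\<^sup>+y. g y * h x \<partial>M \<partial>N)"
    by (subst nn_integral_fst[symmetric]) auto
  also have "\<dots> = (\<integral>\<^sup>+x. (\<integral>\<^sup>+y. g y \<partial>M) * h x \<partial>N)"
    by (intro nn_integral_cong nn_integral_multc) simp
  also have "\<dots> = (\<integral>\<^sup>+y. g y \<partial>M) * (\<integral>\<^sup>+x. h x \<partial>N)" by (rule nn_integral_cmult) simp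
  finally show ?thesis .
qed

lemma emeasure_distr_eq_nn_integral_indicator:
  assumes [measurable]: "h \<in> measurable M N" "B \<in> sets N"
  shows "emeasure (distr M N h) B = (\<integral>\<^sup>+x. indicator B (h x) \<partial>M)"
proof -
  have "emeasure (distr M N h) B = (\<integral>\<^sup>+x. indicator B x \<partial>distr M N h)"
    by (simp add: nn_integral_indicator)
  also have "\<dots> = (\<integral>\<^sup>+x. indicator B (h x) \<partial>M)"
    by (intro nn_integral_distr) measurable
  finally show ?thesis .
qed

section \<open>Couplings and the Wasserstein distance\<close>

definition transport_cost :: "'a::euclidean_space measure \<Rightarrow> 'a measure \<Rightarrow> ennreal" where
  "transport_cost \<mu> \<nu> = (INF \<pi>\<in>couplings \<mu> \<nu>. \<integral>\<^sup>+ p. ennreal (dist (fst p) (snd p)) \<partial>\<pi>)"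

lemma W1_eq_transport_cost: "W1 \<mu> \<nu> = enn2real (transport_cost \<mu> \<nu>)"
  by (simp add: W1_def transport_cost_def)

lemma W1_nonneg: "0 \<le> W1 \<mu> \<nu>"
  by (simp add: W1_def)

lemma distr_pair_in_couplings:
  fixes X Y :: "'b \<Rightarrow> 'a::euclidean_space"
  assumes "prob_space M" and [measurable]: "X \<in> borel_measurable M" "Y \<in> borel_measurable M"
  shows "distr M (borel \<Otimes>\<^sub>M borel) (\<lambda>\<omega>. (X \<omega>, Y \<omega>)) \<in> couplings (distr M borel X) (distr M borel Y)"
  unfolding couplings_def
  by (auto intro!: prob_space.prob_space_distr assms simp: distr_distr comp_def)

lemma transport_cost_le_nn_integral_dist:
  fixes X Y :: "'b \<Rightarrow> 'a::euclidean_space"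
  assumes "prob_space M" and [measurable]: "X \<in> borel_measurable M" "Y \<in> borel_measurable M"
  shows "transport_cost (distr M borel X) (distr M borel Y) \<le> (\<integral>\<^sup>+\<omega>. ennreal (dist (X \<omega>) (Y \<omega>)) \<partial>M)"
proof -
  have "transport_cost (distr M borel X) (distr M borel Y)
     \<le> (\<integral>\<^sup>+ p. ennreal (dist (fst p) (snd p)) \<partial>distr M (borel \<Otimes>\<^sub>M borel) (\<lambda>\<omega>. (X \<omega>, Y \<omega>)))"
    unfolding transport_cost_def by (rule INF_lower[OF distr_pair_in_couplings[OF assms]])
  also have "\<dots> = (\<integral>\<^sup>+\<omega>. ennreal (dist (X \<omega>) (Y \<omega>)) \<partial>M)"
    by (subst nn_integral_distr) auto
  finally show ?thesis .
qed

lemma W1_le_nn_integral_dist: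
  fixes X Y :: "'b \<Rightarrow> 'a::euclidean_space"
  assumes "prob_space M" "X \<in> borel_measurable M" "Y \<in> borel_measurable M"
  shows "ennreal (W1 (distr M borel X) (distr M borel Y)) \<le> (\<integral>\<^sup>+\<omega>. ennreal (dist (X \<omega>) (Y \<omega>)) \<partial>M)"
  unfolding W1_eq_transport_cost
  by (rule order_trans[OF _ transport_cost_le_nn_integral_dist[OF assms]]) (simp add: ennreal_enn2real_if)

lemma transport_cost_P1_less_top:
  assumes "\<mu> \<in> P1" "\<nu> \<in> P1"
  shows "transport_cost \<mu> \<nu> < \<infinity>"
proof -
  interpret M: prob_space \<mu> using P1D(1)[OF assms(1)] .
  interpret N: prob_space \<nu> using P1D(1)[OF assms(2)] .
  interpret pair_prob_space \<mu> \<nu> ..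
  have [measurable_cong]: "sets \<mu> = sets borel" "sets \<nu> = sets borel" using assms P1D by auto
  have "transport_cost \<mu> \<nu> \<le> (\<integral>\<^sup>+\<omega>. ennreal (dist (fst \<omega>) (snd \<omega>)) \<partial>(\<mu> \<Otimes>\<^sub>M \<nu>))"
    using transport_cost_le_nn_integral_dist[of "\<mu> \<Otimes>\<^sub>M \<nu>" fst snd]
    by (simp add: prob_space_axioms P1_distr_pair_fst[OF assms] P1_distr_pair_snd[OF assms])
  also have "\<dots> \<le> (\<integral>\<^sup>+\<omega>. ennreal (norm (fst \<omega>)) + ennreal (norm (snd \<omega>)) \<partial>(\<mu> \<Otimes>\<^sub>M \<nu>))"
    by (intro nn_integral_mono) (auto simp: dist_norm norm_triangle_ineq4 simp flip: ennreal_plus)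
  also have "\<dots> = (\<integral>\<^sup>+\<omega>. ennreal (norm (fst \<omega>)) \<partial>(\<mu> \<Otimes>\<^sub>M \<nu>)) + (\<integral>\<^sup>+\<omega>. ennreal (norm (snd \<omega>)) \<partial>(\<mu> \<Otimes>\<^sub>M \<nu>))"
    by (rule nn_integral_add) auto
  also have "(\<integral>\<^sup>+\<omega>. ennreal (norm (fst \<omega>)) \<partial>(\<mu> \<Otimes>\<^sub>M \<nu>)) = (\<integral>\<^sup>+x. ennreal (norm x) \<partial>\<mu>)"
    by (subst P1_distr_pair_fst[OF assms, symmetric]) (simp add: nn_integral_distr)
  also have "(\<integral>\<^sup>+\<omega>. ennreal (norm (snd \<omega>)) \<partial>(\<mu> \<Otimes>\<^sub>M \<nu>)) = (\<integral>\<^sup>+x. ennreal (norm x) \<partial>\<nu>)"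
    by (subst (2) P1_distr_pair_snd[OF assms, symmetric]) (simp add: nn_integral_distr)
  also have "(\<integral>\<^sup>+x. ennreal (norm x) \<partial>\<mu>) + (\<integral>\<^sup>+x. ennreal (norm x) \<partial>\<nu>) < \<infinity>"
    using P1D(3)[OF assms(1)] P1D(3)[OF assms(2)] by simp
  finally show ?thesis .
qed

lemma transport_cost_swap_le: "transport_cost \<nu> \<mu> \<le> transport_cost \<mu> \<nu>"
  unfolding transport_cost_def
proof (rule INF_greatest)
  fix \<pi> assume \<pi>: "\<pi> \<in> couplings \<mu> \<nu>"
  have [measurable_cong]: "sets \<pi> = sets (borel \<Otimes>\<^sub>M borel)" using \<pi> by (auto simp: couplings_def)
  let ?\<pi>' = "distr \<pi> (borel \<Otimes>\<^sub>M borel) (\<lambda>p. (snd p, fst p))"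
  have "?\<pi>' \<in> couplings \<nu> \<mu>"
    using \<pi> by (auto simp: couplings_def distr_distr comp_def intro!: prob_space.prob_space_distr)
  then have "(INF \<pi>\<in>couplings \<nu> \<mu>. \<integral>\<^sup>+ p. ennreal (dist (fst p) (snd p)) \<partial>\<pi>)
      \<le> (\<integral>\<^sup>+ p. ennreal (dist (fst p) (snd p)) \<partial>?\<pi>')"
    by (rule INF_lower)
  also have "\<dots> = (\<integral>\<^sup>+ p. ennreal (dist (fst p) (snd p)) \<partial>\<pi>)"
    by (simp add: nn_integral_distr dist_commute)
  finally show "(INF \<pi>\<in>couplings \<nu> \<mu>. \<integral>\<^sup>+ p. ennreal (dist (fst p) (snd p)) \<partial>\<pi>)
      \<le> (\<integral>\<^sup>+ p. ennreal (dist (fst p) (snd p)) \<partial>\<pi>)" .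
qed

lemma transport_cost_commute: "transport_cost \<mu> \<nu> = transport_cost \<nu> \<mu>"
  by (intro antisym transport_cost_swap_le)

lemma nn_integral_lipschitz_le_coupling:
  fixes g :: "'a::euclidean_space \<Rightarrow> real"
  assumes \<pi>: "\<pi> \<in> couplings \<mu> \<nu>" and [measurable]: "g \<in> borel_measurable borel"
    and lip: "\<And>x y. g x \<le> g y + k * dist x y" and "k \<ge> 0" and "\<And>x. g x \<ge> 0"
  shows "(\<integral>\<^sup>+x. g x \<partial>\<mu>) \<le> (\<integral>\<^sup>+x. g x \<partial>\<nu>) + k * (\<integral>\<^sup>+ p. dist (fst p) (snd p) \<partial>\<pi>)"
proof -
  have [measurable_cong]: "sets \<pi> = sets (borel \<Otimes>\<^sub>M borel)"
    and marg: "distr \<pi> borel fst = \<mu>" "distr \<pi> borel snd = \<nu>"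
    using \<pi> by (auto simp: couplings_def)
  have "(\<integral>\<^sup>+x. g x \<partial>\<mu>) = (\<integral>\<^sup>+p. g (fst p) \<partial>\<pi>)"
    by (subst marg(1)[symmetric]) (simp add: nn_integral_distr)
  also have "\<dots> \<le> (\<integral>\<^sup>+p. ennreal (g (snd p)) + ennreal k * ennreal (dist (fst p) (snd p)) \<partial>\<pi>)"
    using assms by (intro nn_integral_mono) (auto simp flip: ennreal_plus ennreal_mult intro!: ennreal_leI)
  also have "\<dots> = (\<integral>\<^sup>+p. g (snd p) \<partial>\<pi>) + k * (\<integral>\<^sup>+ p. dist (fst p) (snd p) \<partial>\<pi>)"
    by (simp add: nn_integral_add nn_integral_cmult)
  also have "(\<integral>\<^sup>+p. g (snd p) \<partial>\<pi>) = (\<integral>\<^sup>+x. g x \<partial>\<nu>)"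
    by (subst marg(2)[symmetric]) (simp add: nn_integral_distr)
  finally show ?thesis .
qed

lemma nn_integral_lipschitz_le_of_transport_cost_0:
  fixes g :: "'a::euclidean_space \<Rightarrow> real"
  assumes zero: "transport_cost \<mu> \<nu> = 0" and g: "g \<in> borel_measurable borel"
    and lip: "\<And>x y. g x \<le> g y + k * dist x y" and k: "k \<ge> 0" and g_nonneg: "\<And>x. g x \<ge> 0"
  shows "(\<integral>\<^sup>+x. g x \<partial>\<mu>) \<le> (\<integral>\<^sup>+x. g x \<partial>\<nu>)"
proof (rule ennreal_le_epsilon)
  fix e :: real assume e: "0 < e"
  then have "transport_cost \<mu> \<nu> < ennreal (e / (k + 1))"
    using zero k by simp
  then obtain \<pi> where \<pi>: "\<pi> \<in> couplings \<mu> \<nu>"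
    and small: "(\<integral>\<^sup>+ p. dist (fst p) (snd p) \<partial>\<pi>) < ennreal (e / (k + 1))"
    by (auto simp: transport_cost_def INF_less_iff)
  have "ennreal k * (\<integral>\<^sup>+ p. dist (fst p) (snd p) \<partial>\<pi>) \<le> ennreal k * ennreal (e / (k + 1))"
    using small by (intro mult_left_mono) auto
  also have "\<dots> \<le> ennreal e"
    using k e by (simp add: field_simps flip: ennreal_mult)
  finally show "(\<integral>\<^sup>+x. g x \<partial>\<mu>) \<le> (\<integral>\<^sup>+x. g x \<partial>\<nu>) + ennreal e"
    using nn_integral_lipschitz_le_coupling[OF \<pi> g lip k g_nonneg] by (meson add_left_mono order_trans)
qed

lemma SUP_min_infdist_eq_indicator:
  fixes U :: "'a::euclidean_space set"
  assumes "open U" "U \<noteq> UNIV"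
  shows "(SUP n. ennreal (min 1 (real n * infdist x (- U)))) = indicator U x"
proof (cases "x \<in> U")
  case True
  have "closed (- U)" "- U \<noteq> {}" using assms by auto
  then have pos: "infdist x (- U) > 0"
    using in_closed_iff_infdist_zero[of "- U" x] True infdist_nonneg[of x "- U"] by auto
  obtain n :: nat where "1 / infdist x (- U) < n" using reals_Archimedean2 by blast
  then have "ennreal (min 1 (real n * infdist x (- U))) = 1"
    using pos by (simp add: field_simps)
  then have "1 \<le> (SUP n. ennreal (min 1 (real n * infdist x (- U))))"
    by (metis UNIV_I SUP_upper)
  moreover have "(SUP n. ennreal (min 1 (real n * infdist x (- U)))) \<le> 1"
    by (intro SUP_least) auto
  ultimately show ?thesis using True by simp
next
  case False
  then have "infdist x (- U) = 0" by (simp add: infdist_zero)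
  then show ?thesis using False by simp
qed

lemma incseq_min_infdist:
  "incseq (\<lambda>n x. ennreal (min 1 (real n * infdist x (U::'a::euclidean_space set))))"
  by (auto simp: incseq_def le_fun_def intro!: ennreal_leI min.mono mult_right_mono infdist_nonneg)

lemma min_infdist_lipschitz:
  "min 1 (real n * infdist x U) \<le> min 1 (real n * infdist y U) + real n * dist x y"
proof -
  have "real n * infdist x U \<le> real n * infdist y U + real n * dist x y"
    using infdist_triangle[of x U y] by (metis distrib_left mult_left_mono of_nat_0_le_iff)
  then show ?thesis
    by (smt (verit) min_def mult_nonneg_nonneg of_nat_0_le_iff zero_le_dist)
qed

lemma emeasure_open_eq_of_transport_cost_0:
  fixes \<mu> \<nu> :: "'a::euclidean_space measure"
  assumes P1: "\<mu> \<in> P1" "\<nu> \<in> P1" and zero: "transport_cost \<mu> \<nu> = 0" and "open U"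
  shows "emeasure \<mu> U = emeasure \<nu> U"
proof (cases "U = UNIV")
  case True
  then show ?thesis using P1 P1D(1) prob_space.emeasure_space_1 space_P1 by metis
next
  case False
  \<comment> \<open>Integrals of Lipschitz functions agree, and these ones increase to the indicator of \<open>U\<close>.\<close>
  define h where "h n x = min 1 (real n * infdist x (- U))" for n x
  have [measurable]: "h n \<in> borel_measurable borel" for n
    unfolding h_def by (intro borel_measurable_continuous_onI continuous_intros)
  have h_lip: "h n x \<le> h n y + real n * dist x y" "h n x \<ge> 0" for n x y
    unfolding h_def by (auto intro: min_infdist_lipschitz infdist_nonneg mult_nonneg_nonneg)
  have incseq_h: "incseq (\<lambda>n x. ennreal (h n x))"
    unfolding h_def by (rule incseq_min_infdist)
  have nn_integral_h: "(\<integral>\<^sup>+x. h n x \<partial>\<mu>) = (\<integral>\<^sup>+x. h n x \<partial>\<nu>)" for n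
    using zero transport_cost_commute[of \<mu> \<nu>]
    by (intro antisym nn_integral_lipschitz_le_of_transport_cost_0[where k="real n"] h_lip) auto
  have emeasure_SUP: "emeasure M U = (SUP n. \<integral>\<^sup>+x. h n x \<partial>M)" if "sets M = sets borel" for M :: "'a measure"
  proof -
    have [measurable_cong]: "sets M = sets borel" by fact
    have "emeasure M U = (\<integral>\<^sup>+x. (SUP n. ennreal (h n x)) \<partial>M)"
      using \<open>open U\<close> False unfolding h_def
      by (simp add: SUP_min_infdist_eq_indicator nn_integral_indicator)
    also have "\<dots> = (SUP n. \<integral>\<^sup>+x. h n x \<partial>M)"
      by (rule nn_integral_monotone_convergence_SUP[OF incseq_h]) measurable
    finally show ?thesis .
  qed
  show ?thesis
    using emeasure_SUP[OF P1D(2)[OF P1(1)]] emeasure_SUP[OF P1D(2)[OF P1(2)]] nn_integral_h by simp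
qed

lemma W1_eq_0_imp_eq:
  fixes \<mu> \<nu> :: "'a::euclidean_space measure"
  assumes P1: "\<mu> \<in> P1" "\<nu> \<in> P1" and "W1 \<mu> \<nu> = 0"
  shows "\<mu> = \<nu>"
proof (rule measure_eqI_generator_eq[where E="Collect open" and \<Omega>=UNIV and A="\<lambda>_. UNIV"])
  have "transport_cost \<mu> \<nu> = 0"
    using assms transport_cost_P1_less_top[OF P1] by (auto simp: W1_eq_transport_cost enn2real_eq_0_iff)
  then show "X \<in> Collect open \<Longrightarrow> emeasure \<mu> X = emeasure \<nu> X" for X
    using emeasure_open_eq_of_transport_cost_0[OF P1] by simp
  show "sets \<mu> = sigma_sets UNIV (Collect open)" "sets \<nu> = sigma_sets UNIV (Collect open)"
    using P1D(2) P1 by (simp_all add: borel_def sets_measure_of)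
  show "emeasure \<mu> UNIV \<noteq> \<infinity>"
    using prob_space.emeasure_space_1[OF P1D(1)[OF P1(1)]] space_P1[OF P1(1)] by simp
qed (auto simp: Int_stable_def)

lemma dist_le_Dlip:
  fixes f :: "'a::euclidean_space \<Rightarrow> 'a measure \<Rightarrow> 'c \<Rightarrow> 'a"
  assumes "\<mu> \<in> P1" "\<nu> \<in> P1"
  shows "ennreal (dist (f x \<mu> z) (f y \<nu> z)) \<le> Dlip f z * ennreal (dist x y + W1 \<mu> \<nu>)"
proof (cases "(x, \<mu>) = (y, \<nu>)")
  case True
  then show ?thesis by simp
next
  case False
  define d where "d = dist x y + W1 \<mu> \<nu>"
  \<comment> \<open>\<open>W\<^sub>1\<close> separates the points of \<open>P1\<close>, so the quotients in \<open>Dlip\<close> have positive denominators.\<close>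
  have "d \<noteq> 0"
    using False W1_eq_0_imp_eq[OF assms] add_nonneg_eq_0_iff[OF zero_le_dist W1_nonneg]
    by (auto simp: d_def)
  then have d_pos: "d > 0"
    using W1_nonneg[of \<mu> \<nu>] zero_le_dist[of x y] unfolding d_def by linarith
  have "ennreal (dist (f x \<mu> z) (f y \<nu> z) / d) \<le> Dlip f z"
    unfolding Dlip_def d_def by (rule SUP_upper2[where i="((x, \<mu>), (y, \<nu>))"]) (use assms False in auto)
  then have "ennreal (dist (f x \<mu> z) (f y \<nu> z) / d) * ennreal d \<le> Dlip f z * ennreal d"
    by (rule mult_right_mono) simp
  then show ?thesis
    using d_pos by (simp add: d_def flip: ennreal_mult)
qed

section \<open>Geometric rates\<close>

lemma dist_lim_le_suminf_dist:
  fixes x :: "nat \<Rightarrow> 'b::banach"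
  shows "ennreal (dist (x n) (lim x)) \<le> (\<Sum>k. ennreal (dist (x (Suc (k + n))) (x (k + n))))"
proof (cases "(\<Sum>k. ennreal (dist (x (Suc (k + n))) (x (k + n)))) = \<top>")
  case False
  define u where "u k = x (Suc (k + n)) - x (k + n)" for k
  have norm_summable: "summable (\<lambda>k. norm (u k))"
    using summable_suminf_not_top[OF _ False] by (simp add: u_def dist_norm)
  have "(\<lambda>m. x n + (\<Sum>k<m. u k)) \<longlonglongrightarrow> x n + suminf u"
    using summable_norm_cancel[OF norm_summable] by (intro tendsto_add tendsto_const summable_LIMSEQ)
  moreover have "x n + (\<Sum>k<m. u k) = x (m + n)" for m
    using sum_lessThan_telescope[of "\<lambda>k. x (k + n)" m] by (simp add: u_def)
  ultimately have "x \<longlonglongrightarrow> x n + suminf u"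
    by (simp add: LIMSEQ_offset[where k=n])
  then have "dist (x n) (lim x) = norm (suminf u)"
    by (simp add: limI dist_norm)
  also have "\<dots> \<le> (\<Sum>k. norm (u k))" by (rule summable_norm[OF norm_summable])
  finally have "ennreal (dist (x n) (lim x)) \<le> ennreal (\<Sum>k. norm (u k))" by (rule ennreal_leI)
  also have "\<dots> = (\<Sum>k. ennreal (dist (x (Suc (k + n))) (x (k + n))))"
    using norm_summable by (simp add: suminf_ennreal2 u_def dist_norm)
  finally show ?thesis .
qed simp

lemma nn_integral_dist_lim_le_geometric:
  fixes X :: "nat \<Rightarrow> 'b \<Rightarrow> 'c::{banach, second_countable_topology}"
  assumes [measurable]: "\<And>n. X n \<in> borel_measurable M"
    and step: "\<And>m. (\<integral>\<^sup>+\<omega>. dist (X (Suc m) \<omega>) (X m \<omega>) \<partial>M) \<le> ennreal (c * r ^ m)"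
    and "0 \<le> r" "r < 1" "0 \<le> c"
  shows "(\<integral>\<^sup>+\<omega>. dist (X n \<omega>) (lim (\<lambda>k. X k \<omega>)) \<partial>M) \<le> ennreal (c / (1 - r) * r ^ n)"
proof -
  have "(\<lambda>k. c * r ^ n * r ^ k) sums (c * r ^ n * (1 / (1 - r)))"
    using assms by (intro sums_mult geometric_sums) simp
  then have tail_sum: "(\<lambda>k. c * r ^ (k + n)) sums (c / (1 - r) * r ^ n)"
    by (simp add: power_add mult_ac)
  have "(\<integral>\<^sup>+\<omega>. dist (X n \<omega>) (lim (\<lambda>k. X k \<omega>)) \<partial>M)
      \<le> (\<integral>\<^sup>+\<omega>. (\<Sum>k. ennreal (dist (X (Suc (k + n)) \<omega>) (X (k + n) \<omega>))) \<partial>M)"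
    by (intro nn_integral_mono dist_lim_le_suminf_dist)
  also have "\<dots> = (\<Sum>k. \<integral>\<^sup>+\<omega>. dist (X (Suc (k + n)) \<omega>) (X (k + n) \<omega>) \<partial>M)"
    by (rule nn_integral_suminf) measurable
  also have "\<dots> \<le> (\<Sum>k. ennreal (c * r ^ (k + n)))"
    by (intro suminf_le step) auto
  also have "\<dots> = ennreal (c / (1 - r) * r ^ n)"
    using assms by (intro suminf_ennreal_eq[OF _ tail_sum]) auto
  finally show ?thesis .
qed

lemma limsup_log_rate_neg:
  fixes w :: "nat \<Rightarrow> real"
  assumes w_nonneg: "\<And>n. 0 \<le> w n" and w_le: "\<And>n. w n \<le> C * r ^ n"
    and r: "0 \<le> r" "r < 1" and "C \<ge> 0"
  shows "limsup (\<lambda>n. log_rate (w n) n) < 0"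
proof -
  define s where "s = (1 + r) / 2"
  have s: "0 < s" "s < 1" "r \<le> s" using r by (auto simp: s_def)
  have ln_s: "ln s < 0" using s by simp
  have w_le': "w n \<le> (C + 1) * s ^ n" for n
  proof -
    have "C * r ^ n \<le> (C + 1) * s ^ n"
      using s r \<open>C \<ge> 0\<close> by (intro mult_mono power_mono) auto
    then show ?thesis using w_le[of n] by linarith
  qed
  obtain N :: nat where N: "2 * ln (C + 1) / (- ln s) < N" using reals_Archimedean2 by blast
  have bound: "log_rate (w n) n \<le> ereal (ln s / 2)" if n: "n \<ge> max N 1" for n
  proof (cases "w n = 0")
    case False
    then have "ln (w n) \<le> ln ((C + 1) * s ^ n)"
      using w_nonneg[of n] w_le'[of n] by simp
    also have "\<dots> = ln (C + 1) + real n * ln s"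
      using s \<open>C \<ge> 0\<close> by (simp add: ln_mult ln_realpow)
    also have "2 * ln (C + 1) / (- ln s) < real n"
      using N n by simp
    then have "2 * ln (C + 1) < real n * (- ln s)"
      using ln_s by (simp add: field_simps)
    then have "ln (C + 1) + real n * ln s \<le> real n * (ln s / 2)"
      by (simp add: algebra_simps)
    finally show ?thesis
      using False n by (simp add: log_rate_def divide_le_eq mult.commute)
  qed (simp add: log_rate_def)
  then have "limsup (\<lambda>n. log_rate (w n) n) \<le> ereal (ln s / 2)"
    by (intro Limsup_bounded eventually_sequentiallyI[of "max N 1"] bound)
  also have "\<dots> < 0" using ln_s by simp
  finally show ?thesis .
qed

section \<open>The mean-field map\<close>

locale mean_field_map =
  fixes A :: "real^'d^'d" and \<delta> :: real and \<theta> :: "(real^'m) measure"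
    and f :: "real^'d \<Rightarrow> (real^'d) measure \<Rightarrow> real^'m \<Rightarrow> real^'d"
  assumes theta: "prob_space \<theta>" and theta_sets: "sets \<theta> = sets borel"
    and f_measurable: "\<And>\<mu>. \<mu> \<in> P1 \<Longrightarrow> (\<lambda>(x, z). f x \<mu> z) \<in> borel_measurable (borel \<Otimes>\<^sub>M borel)"
    and Dlip_measurable[measurable]: "Dlip f \<in> borel_measurable \<theta>"
    and Dlip_integrable: "(\<integral>\<^sup>+ z. Dlip f z \<partial>\<theta>) < \<infinity>"
    and f_0_integrable: "(\<integral>\<^sup>+ z. ennreal (norm (f 0 (return borel 0) z)) \<partial>\<theta>) < \<infinity>"
    and delta_pos: "\<delta> > 0"
    and contraction: "onorm (\<lambda>x. A *v x) + 2 * \<delta> * enn2real (\<integral>\<^sup>+ z. Dlip f z \<partial>\<theta>) < 1"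

sublocale mean_field_map \<subseteq> TH: prob_space \<theta>
  by (rule theta)

context mean_field_map
begin

abbreviation "\<Psi> \<equiv> Psi A \<delta> f \<theta>"
abbreviation "norm_A \<equiv> onorm (\<lambda>x. A *v x)"

definition "\<sigma> = enn2real (\<integral>\<^sup>+ z. Dlip f z \<partial>\<theta>)"
definition "q = norm_A + 2 * \<delta> * \<sigma>"
definition "Phi \<mu> x z = A *v x + \<delta> *\<^sub>R f x \<mu> z"

lemma nn_integral_Dlip: "(\<integral>\<^sup>+ z. Dlip f z \<partial>\<theta>) = ennreal \<sigma>"
  using Dlip_integrable unfolding \<sigma>_def by simp

lemma norm_A_nonneg: "norm_A \<ge> 0"
  by (rule onorm_pos_le) simp

lemma q_nonneg: "q \<ge> 0"
  unfolding q_def \<sigma>_def using norm_A_nonneg delta_pos by simp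

lemma q_less_1: "q < 1"
  unfolding q_def \<sigma>_def using contraction by simp

lemma snd_measurable_theta[measurable]: "snd \<in> borel_measurable (M \<Otimes>\<^sub>M \<theta>)"
  using measurable_snd[of M \<theta>] theta_sets by (simp cong: measurable_cong_sets)

lemma f_comp_measurable:
  assumes "\<mu> \<in> P1" "X \<in> borel_measurable M" "Z \<in> borel_measurable M"
  shows "(\<lambda>\<omega>. f (X \<omega>) \<mu> (Z \<omega>)) \<in> borel_measurable M"
  using measurable_compose[OF measurable_Pair[OF assms(2,3)] f_measurable[OF assms(1)]] by simp

lemma Phi_comp_measurable:
  assumes "\<mu> \<in> P1" and [measurable]: "X \<in> borel_measurable M" and "Z \<in> borel_measurable M"
  shows "(\<lambda>\<omega>. Phi \<mu> (X \<omega>) (Z \<omega>)) \<in> borel_measurable M"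
proof -
  have [measurable]: "(\<lambda>x. A *v x) \<in> borel_measurable borel"
    by (intro borel_measurable_continuous_onI linear_continuous_on) simp
  have [measurable]: "(\<lambda>\<omega>. f (X \<omega>) \<mu> (Z \<omega>)) \<in> borel_measurable M"
    by (rule f_comp_measurable[OF assms])
  show ?thesis unfolding Phi_def by measurable
qed

lemma dist_Phi_le:
  assumes "\<mu> \<in> P1" "\<nu> \<in> P1"
  shows "ennreal (dist (Phi \<mu> x z) (Phi \<nu> y z))
    \<le> norm_A * ennreal (dist x y) + \<delta> * (Dlip f z * ennreal (dist x y + W1 \<mu> \<nu>))"
proof -
  have "dist (A *v x) (A *v y) \<le> norm_A * dist x y"
    using onorm[of "\<lambda>x. A *v x" "x - y"] by (simp add: dist_norm matrix_vector_mult_diff_distrib)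
  moreover have "dist (\<delta> *\<^sub>R f x \<mu> z) (\<delta> *\<^sub>R f y \<nu> z) = \<delta> * dist (f x \<mu> z) (f y \<nu> z)"
    using delta_pos by (simp add: dist_norm flip: scaleR_diff_right)
  ultimately have "dist (Phi \<mu> x z) (Phi \<nu> y z) \<le> norm_A * dist x y + \<delta> * dist (f x \<mu> z) (f y \<nu> z)"
    using dist_triangle_add[of "A *v x" "\<delta> *\<^sub>R f x \<mu> z" "A *v y" "\<delta> *\<^sub>R f y \<nu> z"]
    unfolding Phi_def by linarith
  then have "ennreal (dist (Phi \<mu> x z) (Phi \<nu> y z))
      \<le> ennreal (norm_A * dist x y + \<delta> * dist (f x \<mu> z) (f y \<nu> z))"
    by (rule ennreal_leI)
  also have "\<dots> = norm_A * ennreal (dist x y) + \<delta> * ennreal (dist (f x \<mu> z) (f y \<nu> z))"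
    using norm_A_nonneg delta_pos by (simp add: ennreal_plus ennreal_mult)
  also have "\<dots> \<le> norm_A * ennreal (dist x y) + \<delta> * (Dlip f z * ennreal (dist x y + W1 \<mu> \<nu>))"
    by (intro add_left_mono mult_left_mono dist_le_Dlip assms) simp
  finally show ?thesis .
qed

end

section \<open>Realisation on the path space\<close>

locale mean_field_path_space = mean_field_map A \<delta> \<theta> f
  for A :: "real^'d^'d" and \<delta> :: real and \<theta> :: "(real^'m) measure"
    and f :: "real^'d \<Rightarrow> (real^'d) measure \<Rightarrow> real^'m \<Rightarrow> real^'d" +
  fixes \<rho> :: "'a measure"
  assumes rho: "prob_space \<rho>"

sublocale mean_field_path_space \<subseteq> Omega: prob_space "\<rho> \<Otimes>\<^sub>M stream_space \<theta>"
proof -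
  interpret R: prob_space \<rho> by (rule rho)
  interpret S: prob_space "stream_space \<theta>" by (rule TH.prob_space_stream_space)
  interpret pair_prob_space \<rho> "stream_space \<theta>" ..
  show "prob_space (\<rho> \<Otimes>\<^sub>M stream_space \<theta>)" by (rule prob_space_axioms)
qed

context mean_field_path_space
begin

abbreviation "\<Omega> \<equiv> \<rho> \<Otimes>\<^sub>M stream_space \<theta>"

definition "shift_noise \<omega> = (fst \<omega>, stl (snd \<omega>))"
definition law :: "('a \<times> (real^'m) stream \<Rightarrow> real^'d) \<Rightarrow> (real^'d) measure" where
  "law X = distr \<Omega> borel X"
definition "T X \<omega> = Phi (law X) (X (shift_noise \<omega>)) (shd (snd \<omega>))"
definition dist_L1 :: "('a \<times> (real^'m) stream \<Rightarrow> real^'d) \<Rightarrow> ('a \<times> (real^'m) stream \<Rightarrow> real^'d) \<Rightarrow> ennreal"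
  where "dist_L1 X Y = (\<integral>\<^sup>+\<omega>. ennreal (dist (X \<omega>) (Y \<omega>)) \<partial>\<Omega>)"
definition "L1_rv X \<longleftrightarrow> X \<in> borel_measurable \<Omega> \<and> dist_L1 X (\<lambda>_. 0) < \<infinity>"

lemma shift_noise_measurable[measurable]: "shift_noise \<in> measurable \<Omega> \<Omega>"
  unfolding shift_noise_def by measurable

lemma shd_measurable[measurable]: "(\<lambda>\<omega>. shd (snd \<omega>)) \<in> borel_measurable \<Omega>"
proof -
  have "(\<lambda>\<omega>. shd (snd \<omega>)) \<in> measurable \<Omega> \<theta>" by measurable
  then show ?thesis using theta_sets by (simp cong: measurable_cong_sets)
qed

lemma nn_integral_shift_noise:
  assumes [measurable]: "G \<in> borel_measurable (\<Omega> \<Otimes>\<^sub>M \<theta>)"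
  shows "(\<integral>\<^sup>+\<omega>. G (shift_noise \<omega>, shd (snd \<omega>)) \<partial>\<Omega>) = (\<integral>\<^sup>+p. G p \<partial>(\<Omega> \<Otimes>\<^sub>M \<theta>))"
proof -
  interpret S: prob_space "stream_space \<theta>" by (rule TH.prob_space_stream_space)
  interpret ST: pair_sigma_finite \<theta> "stream_space \<theta>" ..
  have "(\<integral>\<^sup>+\<omega>. G (shift_noise \<omega>, shd (snd \<omega>)) \<partial>\<Omega>) = (\<integral>\<^sup>+a. \<integral>\<^sup>+s. G ((a, stl s), shd s) \<partial>stream_space \<theta> \<partial>\<rho>)"
    by (subst S.nn_integral_fst[symmetric]) (auto simp: shift_noise_def)
  also have "\<dots> = (\<integral>\<^sup>+a. \<integral>\<^sup>+z. \<integral>\<^sup>+s. G ((a, s), z) \<partial>stream_space \<theta> \<partial>\<theta> \<partial>\<rho>)"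
    by (intro nn_integral_cong, subst TH.nn_integral_stream_space) auto
  also have "\<dots> = (\<integral>\<^sup>+a. \<integral>\<^sup>+s. \<integral>\<^sup>+z. G ((a, s), z) \<partial>\<theta> \<partial>stream_space \<theta> \<partial>\<rho>)"
    by (intro nn_integral_cong ST.Fubini'[symmetric]) simp
  also have "\<dots> = (\<integral>\<^sup>+\<omega>. \<integral>\<^sup>+z. G (\<omega>, z) \<partial>\<theta> \<partial>\<Omega>)"
    by (subst S.nn_integral_fst[symmetric]) auto
  also have "\<dots> = (\<integral>\<^sup>+p. G p \<partial>(\<Omega> \<Otimes>\<^sub>M \<theta>))"
    by (rule TH.nn_integral_fst) simp
  finally show ?thesis .
qed

lemma L1_rv_iff_law_in_P1:
  assumes [measurable]: "X \<in> borel_measurable \<Omega>"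
  shows "L1_rv X \<longleftrightarrow> law X \<in> P1"
proof -
  have "(\<integral>\<^sup>+ x. ennreal (norm x) \<partial>law X) = dist_L1 X (\<lambda>_. 0)"
    unfolding law_def dist_L1_def by (simp add: nn_integral_distr)
  then show ?thesis
    by (auto simp: P1_def L1_rv_def law_def intro!: Omega.prob_space_distr)
qed

lemma L1_rv_measurable: "L1_rv X \<Longrightarrow> X \<in> borel_measurable \<Omega>"
  by (simp add: L1_rv_def)

lemma law_in_P1: "L1_rv X \<Longrightarrow> law X \<in> P1"
  using L1_rv_iff_law_in_P1 L1_rv_measurable by blast

lemma T_measurable:
  assumes "L1_rv X"
  shows "T X \<in> borel_measurable \<Omega>"
proof -
  have [measurable]: "X \<in> borel_measurable \<Omega>" using L1_rv_measurable[OF assms] .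
  show ?thesis
    unfolding T_def by (intro Phi_comp_measurable law_in_P1 assms) measurable
qed

lemma law_T:
  assumes X: "L1_rv X"
  shows "law (T X) = \<Psi> (law X)"
proof (rule measure_eqI)
  have [measurable]: "X \<in> borel_measurable \<Omega>" using L1_rv_measurable[OF X] .
  have Phi_law_measurable[measurable]:
    "(\<lambda>p. Phi (law X) (fst p) (snd p)) \<in> borel_measurable (M \<Otimes>\<^sub>M \<theta>)"
    if "sets M = sets borel" for M :: "(real^'d) measure"
    using that by (intro Phi_comp_measurable law_in_P1 X) (auto cong: measurable_cong_sets)
  have [measurable_cong]: "sets (law X) = sets borel" by (simp add: law_def)
  have law_pair: "distr (\<Omega> \<Otimes>\<^sub>M \<theta>) (borel \<Otimes>\<^sub>M \<theta>) (\<lambda>(\<omega>, z). (X \<omega>, z)) = law X \<Otimes>\<^sub>M \<theta>"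
    using pair_measure_distr[of X \<Omega> borel "\<lambda>z. z" \<theta> \<theta>, symmetric]
      TH.sigma_finite_measure_axioms by (simp add: law_def distr_id2 case_prod_beta)
  show "sets (law (T X)) = sets (\<Psi> (law X))" by (simp add: law_def Psi_def)
  fix B assume "B \<in> sets (law (T X))"
  then have [measurable]: "B \<in> sets borel" by (simp add: law_def)
  have "emeasure (law (T X)) B = (\<integral>\<^sup>+\<omega>. indicator B (T X \<omega>) \<partial>\<Omega>)"
    unfolding law_def using T_measurable[OF X] by (intro emeasure_distr_eq_nn_integral_indicator) auto
  also have "\<dots> = (\<integral>\<^sup>+p. indicator B (Phi (law X) (X (fst p)) (snd p)) \<partial>(\<Omega> \<Otimes>\<^sub>M \<theta>))"
  proof -
    have [measurable]: "(\<lambda>p. Phi (law X) (X (fst p)) (snd p)) \<in> borel_measurable (\<Omega> \<Otimes>\<^sub>M \<theta>)"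
      by (intro Phi_comp_measurable law_in_P1 X) measurable
    show ?thesis
      using nn_integral_shift_noise[of "\<lambda>p. indicator B (Phi (law X) (X (fst p)) (snd p))"]
      by (simp add: T_def)
  qed
  also have "\<dots> = (\<integral>\<^sup>+p. indicator B (Phi (law X) (fst p) (snd p)) \<partial>(law X \<Otimes>\<^sub>M \<theta>))"
    by (subst law_pair[symmetric], subst nn_integral_distr) (auto intro!: nn_integral_cong)
  also have "\<dots> = emeasure (\<Psi> (law X)) B"
    using Phi_law_measurable[of "law X"] unfolding Psi_def
    by (subst emeasure_distr_eq_nn_integral_indicator) (auto simp: Phi_def case_prod_beta law_def)
  finally show "emeasure (law (T X)) B = emeasure (\<Psi> (law X)) B" .
qed

lemma dist_L1_commute: "dist_L1 X Y = dist_L1 Y X"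
  unfolding dist_L1_def by (simp add: dist_commute)

lemma dist_L1_triangle:
  assumes [measurable]: "X \<in> borel_measurable \<Omega>" "Y \<in> borel_measurable \<Omega>" "Z \<in> borel_measurable \<Omega>"
  shows "dist_L1 X Z \<le> dist_L1 X Y + dist_L1 Y Z"
proof -
  have "dist_L1 X Z \<le> (\<integral>\<^sup>+\<omega>. ennreal (dist (X \<omega>) (Y \<omega>)) + ennreal (dist (Y \<omega>) (Z \<omega>)) \<partial>\<Omega>)"
    unfolding dist_L1_def by (intro nn_integral_mono) (simp add: dist_triangle flip: ennreal_plus)
  also have "\<dots> = dist_L1 X Y + dist_L1 Y Z"
    unfolding dist_L1_def by (rule nn_integral_add) measurable
  finally show ?thesis .
qed

lemma dist_L1_less_top:
  assumes "L1_rv X" "L1_rv Y"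
  shows "dist_L1 X Y < \<infinity>"
proof -
  have "dist_L1 X Y \<le> dist_L1 X (\<lambda>_. 0) + dist_L1 Y (\<lambda>_. 0)"
    using dist_L1_triangle[of X "\<lambda>_. 0" Y] assms dist_L1_commute[of "\<lambda>_. 0" Y]
    by (simp add: L1_rv_def)
  also have "\<dots> < \<infinity>" using assms by (simp add: L1_rv_def)
  finally show ?thesis .
qed

lemma W1_law_le_dist_L1:
  assumes "X \<in> borel_measurable \<Omega>" "Y \<in> borel_measurable \<Omega>"
  shows "ennreal (W1 (law X) (law Y)) \<le> dist_L1 X Y"
  unfolding law_def dist_L1_def by (rule W1_le_nn_integral_dist[OF Omega.prob_space_axioms assms])

lemma dist_L1_T_le_W1:
  assumes X: "L1_rv X" and Y: "L1_rv Y"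
  shows "dist_L1 (T X) (T Y) \<le> norm_A * dist_L1 X Y + \<delta> * (\<sigma> * (dist_L1 X Y + W1 (law X) (law Y)))"
proof -
  have [measurable]: "X \<in> borel_measurable \<Omega>" "Y \<in> borel_measurable \<Omega>"
    using X Y by (simp_all add: L1_rv_def)
  have [measurable]: "(\<lambda>p. Phi (law X) (X (fst p)) (snd p)) \<in> borel_measurable (\<Omega> \<Otimes>\<^sub>M \<theta>)"
    "(\<lambda>p. Phi (law Y) (Y (fst p)) (snd p)) \<in> borel_measurable (\<Omega> \<Otimes>\<^sub>M \<theta>)"
    by (intro Phi_comp_measurable law_in_P1 X Y; measurable)+
  define W where "W = W1 (law X) (law Y)"
  let ?d = "\<lambda>\<omega>. dist (X \<omega>) (Y \<omega>)"
  have "dist_L1 (T X) (T Y)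
      = (\<integral>\<^sup>+p. dist (Phi (law X) (X (fst p)) (snd p)) (Phi (law Y) (Y (fst p)) (snd p)) \<partial>(\<Omega> \<Otimes>\<^sub>M \<theta>))"
    using nn_integral_shift_noise[of
        "\<lambda>p. ennreal (dist (Phi (law X) (X (fst p)) (snd p)) (Phi (law Y) (Y (fst p)) (snd p)))"]
    by (simp add: dist_L1_def T_def)
  also have "\<dots> \<le> (\<integral>\<^sup>+p. norm_A * ennreal (?d (fst p))
      + \<delta> * (Dlip f (snd p) * ennreal (?d (fst p) + W)) \<partial>(\<Omega> \<Otimes>\<^sub>M \<theta>))"
    unfolding W_def by (intro nn_integral_mono dist_Phi_le law_in_P1 X Y)
  also have "\<dots> = norm_A * (\<integral>\<^sup>+p. ?d (fst p) \<partial>(\<Omega> \<Otimes>\<^sub>M \<theta>))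
      + \<delta> * (\<integral>\<^sup>+p. Dlip f (snd p) * ennreal (?d (fst p) + W) \<partial>(\<Omega> \<Otimes>\<^sub>M \<theta>))"
    by (subst nn_integral_add) (auto simp: nn_integral_cmult)
  also have "(\<integral>\<^sup>+p. ?d (fst p) \<partial>(\<Omega> \<Otimes>\<^sub>M \<theta>)) = dist_L1 X Y"
    unfolding dist_L1_def by (rule TH.nn_integral_pair_fst) measurable
  also have "(\<integral>\<^sup>+p. Dlip f (snd p) * ennreal (?d (fst p) + W) \<partial>(\<Omega> \<Otimes>\<^sub>M \<theta>))
      = \<sigma> * (\<integral>\<^sup>+\<omega>. ennreal (?d \<omega>) + ennreal W \<partial>\<Omega>)"
    using W1_nonneg[of "law X" "law Y"]
    by (subst TH.nn_integral_pair_mult) (simp_all add: nn_integral_Dlip W_def ennreal_plus)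
  also have "(\<integral>\<^sup>+\<omega>. ennreal (?d \<omega>) + ennreal W \<partial>\<Omega>) = dist_L1 X Y + W"
    unfolding dist_L1_def by (subst nn_integral_add) (auto simp: Omega.emeasure_space_1)
  finally show ?thesis unfolding W_def .
qed

lemma dist_L1_T_le:
  assumes X: "L1_rv X" and Y: "L1_rv Y"
  shows "dist_L1 (T X) (T Y) \<le> q * dist_L1 X Y"
proof -
  have W1_le: "ennreal (W1 (law X) (law Y)) \<le> dist_L1 X Y"
    using X Y by (intro W1_law_le_dist_L1 L1_rv_measurable)
  have q_eq: "ennreal q = norm_A + 2 * (ennreal \<delta> * ennreal \<sigma>)"
    unfolding q_def \<sigma>_def using norm_A_nonneg delta_pos
    by (simp add: ennreal_plus ennreal_mult mult.assoc)
  have "dist_L1 (T X) (T Y) \<le> norm_A * dist_L1 X Y + \<delta> * (\<sigma> * (dist_L1 X Y + W1 (law X) (law Y)))"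
    by (rule dist_L1_T_le_W1[OF X Y])
  also have "\<dots> \<le> norm_A * dist_L1 X Y + \<delta> * (\<sigma> * (dist_L1 X Y + dist_L1 X Y))"
    using W1_le by (intro add_left_mono mult_left_mono) simp_all
  also have "\<dots> = q * dist_L1 X Y"
    using q_eq by (simp add: distrib_right mult_2 algebra_simps)
  finally show ?thesis .
qed

lemma law_const_0: "law (\<lambda>_. 0) = return borel 0"
proof (rule measure_eqI)
  fix B assume "B \<in> sets (law (\<lambda>_. 0))"
  then show "emeasure (law (\<lambda>_. 0)) B = emeasure (return borel 0) B"
    unfolding law_def
    by (simp add: emeasure_distr_eq_nn_integral_indicator Omega.emeasure_space_1)
qed (simp add: law_def)

lemma L1_rv_0: "L1_rv (\<lambda>_. 0)"
  by (simp add: L1_rv_def dist_L1_def)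

lemma dist_L1_T_0_less_top: "dist_L1 (T (\<lambda>_. 0)) (\<lambda>_. 0) < \<infinity>"
proof -
  let ?g = "\<lambda>z. ennreal (\<delta> * norm (f 0 (return borel 0) z))"
  have [measurable]: "(\<lambda>z. f 0 (return borel 0) z) \<in> borel_measurable \<theta>"
    using f_comp_measurable[OF return_0_in_P1, of "\<lambda>_. 0" \<theta> "\<lambda>z. z"] theta_sets
    by (simp cong: measurable_cong_sets)
  have norm_f0_measurable: "(\<lambda>z. ennreal (norm (f 0 (return borel 0) z))) \<in> borel_measurable \<theta>"
    by measurable
  have "(\<lambda>p. ?g (snd p)) \<in> borel_measurable (\<Omega> \<Otimes>\<^sub>M \<theta>)" by measurable
  from nn_integral_shift_noise[OF this]
  have "dist_L1 (T (\<lambda>_. 0)) (\<lambda>_. 0) = (\<integral>\<^sup>+p. ?g (snd p) * 1 \<partial>(\<Omega> \<Otimes>\<^sub>M \<theta>))"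
    using delta_pos
    by (simp add: dist_L1_def T_def Phi_def law_const_0)
  also have "\<dots> = (\<integral>\<^sup>+z. ?g z \<partial>\<theta>) * (\<integral>\<^sup>+\<omega>. 1 \<partial>\<Omega>)"
    by (rule TH.nn_integral_pair_mult) auto
  also have "\<dots> = \<delta> * (\<integral>\<^sup>+z. ennreal (norm (f 0 (return borel 0) z)) \<partial>\<theta>)"
    using delta_pos
    by (simp add: Omega.emeasure_space_1 ennreal_mult nn_integral_cmult[OF norm_f0_measurable])
  also have "\<dots> < \<infinity>"
    using f_0_integrable by (simp add: ennreal_mult_less_top)
  finally show ?thesis .
qed

lemma L1_rv_T:
  assumes "L1_rv X"
  shows "L1_rv (T X)"
proof -
  have "dist_L1 (T X) (\<lambda>_. 0) \<le> dist_L1 (T X) (T (\<lambda>_. 0)) + dist_L1 (T (\<lambda>_. 0)) (\<lambda>_. 0)"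
    by (intro dist_L1_triangle T_measurable assms L1_rv_0) simp
  also have "\<dots> \<le> q * dist_L1 X (\<lambda>_. 0) + dist_L1 (T (\<lambda>_. 0)) (\<lambda>_. 0)"
    by (intro add_right_mono dist_L1_T_le assms L1_rv_0)
  also have "\<dots> < \<infinity>"
    using assms dist_L1_T_0_less_top by (simp add: L1_rv_def ennreal_mult_less_top)
  finally show ?thesis
    using T_measurable[OF assms] by (simp add: L1_rv_def)
qed

lemma L1_rv_funpow: "L1_rv X \<Longrightarrow> L1_rv ((T ^^ n) X)"
  by (induction n) (auto intro: L1_rv_T)

lemma law_funpow: "L1_rv X \<Longrightarrow> law ((T ^^ n) X) = (\<Psi> ^^ n) (law X)"
  by (induction n) (auto simp: law_T L1_rv_funpow)

lemma dist_L1_funpow_le: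
  assumes "L1_rv X" "L1_rv Y"
  shows "dist_L1 ((T ^^ n) X) ((T ^^ n) Y) \<le> ennreal (q ^ n) * dist_L1 X Y"
proof (induction n)
  case (Suc n)
  have "dist_L1 ((T ^^ Suc n) X) ((T ^^ Suc n) Y) \<le> q * dist_L1 ((T ^^ n) X) ((T ^^ n) Y)"
    using assms by (simp add: dist_L1_T_le L1_rv_funpow)
  also have "\<dots> \<le> q * (ennreal (q ^ n) * dist_L1 X Y)"
    using Suc by (intro mult_left_mono) auto
  also have "\<dots> = ennreal (q ^ Suc n) * dist_L1 X Y"
    using q_nonneg by (simp add: ennreal_mult mult.assoc)
  finally show ?case .
qed simp

lemma law_eq_of_dist_L1_eq_0:
  assumes [measurable]: "X \<in> borel_measurable \<Omega>" "Y \<in> borel_measurable \<Omega>" and "dist_L1 X Y = 0"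
  shows "law X = law Y"
proof -
  have "AE \<omega> in \<Omega>. ennreal (dist (X \<omega>) (Y \<omega>)) = 0"
    using assms(3) unfolding dist_L1_def by (subst (asm) nn_integral_0_iff_AE) auto
  then have "AE \<omega> in \<Omega>. X \<omega> = Y \<omega>" by eventually_elim simp
  then show ?thesis
    unfolding law_def by (intro distr_cong_AE) auto
qed

text \<open>The limit is taken pointwise; it exists almost surely because the \<open>L\<^sup>1\<close>-increments of the
  iterates decay geometrically.\<close>
lemma L1_limit_of_iterates:
  assumes X0: "L1_rv X0"
  obtains X C where "L1_rv X" "C \<ge> 0" "\<And>n. dist_L1 ((T ^^ n) X0) X \<le> ennreal (C * q ^ n)"
proof -
  define Xn where "Xn n = (T ^^ n) X0" for n
  have L1_Xn: "L1_rv (Xn n)" for n using L1_rv_funpow[OF X0] by (simp add: Xn_def)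
  have [measurable]: "Xn n \<in> borel_measurable \<Omega>" for n using L1_Xn by (simp add: L1_rv_def)
  obtain c where c: "dist_L1 (Xn 1) (Xn 0) = ennreal c" "c \<ge> 0"
    using dist_L1_less_top[OF L1_Xn L1_Xn, of 1 0] by (cases "dist_L1 (Xn 1) (Xn 0)") auto
  have step: "dist_L1 (Xn (Suc m)) (Xn m) \<le> ennreal (c * q ^ m)" for m
    using dist_L1_funpow_le[OF L1_Xn L1_Xn, of m 1 0] c q_nonneg
    by (simp add: Xn_def funpow_swap1 ennreal_mult mult.commute)
  define X where "X \<omega> = lim (\<lambda>n. Xn n \<omega>)" for \<omega>
  have [measurable]: "X \<in> borel_measurable \<Omega>" unfolding X_def by measurable
  define C where "C = c / (1 - q)"
  have "C \<ge> 0" using c q_less_1 by (simp add: C_def)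
  have bound: "dist_L1 (Xn n) X \<le> ennreal (C * q ^ n)" for n
    unfolding dist_L1_def X_def C_def
    by (rule nn_integral_dist_lim_le_geometric) (use step q_nonneg q_less_1 c in \<open>auto simp: dist_L1_def\<close>)
  have "dist_L1 X (\<lambda>_. 0) \<le> dist_L1 (Xn 0) X + dist_L1 (Xn 0) (\<lambda>_. 0)"
    using dist_L1_triangle[of X "Xn 0" "\<lambda>_. 0"] by (simp add: dist_L1_commute)
  also have "\<dots> < \<infinity>"
    using bound[of 0] L1_Xn[of 0] by (simp add: L1_rv_def le_less_trans)
  finally have "L1_rv X" by (simp add: L1_rv_def)
  then show ?thesis
    using that \<open>C \<ge> 0\<close> bound by (simp add: Xn_def)
qed

lemma invariant_law_of_limit:
  assumes X0: "L1_rv X0" and X: "L1_rv X" and "C \<ge> 0"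
    and bound: "\<And>n. dist_L1 ((T ^^ n) X0) X \<le> ennreal (C * q ^ n)"
  shows "\<Psi> (law X) = law X"
proof -
  have [measurable]: "X \<in> borel_measurable \<Omega>" "T X \<in> borel_measurable \<Omega>"
    using X T_measurable by (auto simp: L1_rv_def)
  have L1_iter: "L1_rv ((T ^^ n) X0)" for n using L1_rv_funpow[OF X0] .
  have "dist_L1 (T X) X \<le> ennreal (2 * C * q ^ Suc n)" for n
  proof -
    have "dist_L1 (T X) X \<le> dist_L1 (T X) ((T ^^ Suc n) X0) + dist_L1 ((T ^^ Suc n) X0) X"
      using L1_iter[of "Suc n"] by (intro dist_L1_triangle) (auto simp: L1_rv_def)
    also have "dist_L1 (T X) ((T ^^ Suc n) X0) \<le> q * dist_L1 X ((T ^^ n) X0)"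
      using dist_L1_T_le[OF X L1_iter[of n]] by simp
    also have "\<dots> \<le> q * ennreal (C * q ^ n)"
      using bound[of n] by (intro mult_left_mono) (auto simp: dist_L1_commute)
    also have "dist_L1 ((T ^^ Suc n) X0) X \<le> ennreal (C * q ^ Suc n)"
      by (rule bound)
    also have "q * ennreal (C * q ^ n) + ennreal (C * q ^ Suc n) = ennreal (2 * C * q ^ Suc n)"
      using q_nonneg \<open>C \<ge> 0\<close> by (simp flip: ennreal_mult ennreal_plus add: mult_ac)
    finally show ?thesis by simp
  qed
  moreover have "(\<lambda>n. ennreal (2 * C * q ^ Suc n)) \<longlonglongrightarrow> ennreal 0"
    using q_nonneg q_less_1 by (intro tendsto_ennrealI tendsto_mult_right_zero LIMSEQ_Suc LIMSEQ_power_zero) auto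
  ultimately have "dist_L1 (T X) X = 0"
    using LIMSEQ_le_const[of _ "ennreal 0" "dist_L1 (T X) X"] by (simp add: le_zero_eq)
  from law_eq_of_dist_L1_eq_0[OF T_measurable[OF X] L1_rv_measurable[OF X] this]
  show ?thesis using law_T[OF X] by simp
qed

lemma invariant_laws_eq:
  assumes X: "L1_rv X" and Y: "L1_rv Y" and "\<Psi> (law X) = law X" "\<Psi> (law Y) = law Y"
  shows "law X = law Y"
proof -
  have iter: "(\<Psi> ^^ n) \<mu> = \<mu>" if "\<Psi> \<mu> = \<mu>" for \<mu> n
    using that by (induction n) auto
  obtain c where c: "dist_L1 X Y = ennreal c" "c \<ge> 0"
    using dist_L1_less_top[OF X Y] by (cases "dist_L1 X Y") auto
  have "ennreal (W1 (law X) (law Y)) \<le> ennreal (q ^ n * c)" for n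
  proof -
    have "ennreal (W1 (law X) (law Y)) = ennreal (W1 (law ((T ^^ n) X)) (law ((T ^^ n) Y)))"
      using assms by (simp add: law_funpow iter)
    also have "\<dots> \<le> dist_L1 ((T ^^ n) X) ((T ^^ n) Y)"
      using L1_rv_funpow[OF X] L1_rv_funpow[OF Y] by (intro W1_law_le_dist_L1) (auto simp: L1_rv_def)
    also have "\<dots> \<le> ennreal (q ^ n * c)"
      using dist_L1_funpow_le[OF X Y, of n] c q_nonneg by (simp add: ennreal_mult)
    finally show ?thesis .
  qed
  then have "W1 (law X) (law Y) \<le> q ^ n * c" for n
    using c q_nonneg by (simp add: ennreal_le_iff)
  moreover have "(\<lambda>n. q ^ n * c) \<longlonglongrightarrow> 0"
    using q_nonneg q_less_1 by (intro tendsto_mult_left_zero LIMSEQ_power_zero) auto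
  ultimately have "W1 (law X) (law Y) = 0"
    using LIMSEQ_le_const[of _ 0 "W1 (law X) (law Y)"] W1_nonneg[of "law X" "law Y"] by fastforce
  then show ?thesis
    using W1_eq_0_imp_eq law_in_P1 X Y by blast
qed

lemma law_comp_fst:
  assumes "X \<in> borel_measurable \<rho>"
  shows "law (\<lambda>\<omega>. X (fst \<omega>)) = distr \<rho> borel X"
proof -
  interpret S: prob_space "stream_space \<theta>" by (rule TH.prob_space_stream_space)
  have "law (\<lambda>\<omega>. X (fst \<omega>)) = distr (distr \<Omega> \<rho> fst) borel X"
    unfolding law_def using assms by (subst distr_distr) (auto simp: comp_def)
  then show ?thesis by (simp add: S.distr_pair_fst)
qed

end

section \<open>The invariant measure\<close>

context mean_field_map
begin

lemma geometric_convergence: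
  assumes \<gamma>: "\<gamma> \<in> P1"
  shows "\<exists>\<mu>\<in>P1. \<Psi> \<mu> = \<mu> \<and> (\<exists>C\<ge>0. \<forall>n. W1 ((\<Psi> ^^ n) \<gamma>) \<mu> \<le> C * q ^ n)"
proof -
  interpret G: mean_field_path_space A \<delta> \<theta> f \<gamma>
    using mean_field_map_axioms P1D(1)[OF \<gamma>]
    by (simp add: mean_field_path_space_def mean_field_path_space_axioms_def)
  have [measurable_cong]: "sets \<gamma> = sets borel" using P1D(2)[OF \<gamma>] .
  have law_X0: "G.law fst = \<gamma>"
    using G.law_comp_fst[of "\<lambda>x. x"] distr_id2[OF P1D(2)[OF \<gamma>, symmetric]] by simp
  have X0: "G.L1_rv fst"
    by (subst G.L1_rv_iff_law_in_P1) (simp_all add: law_X0 \<gamma>)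
  obtain X C where X: "G.L1_rv X" and "C \<ge> 0"
    and bound: "\<And>n. G.dist_L1 ((G.T ^^ n) fst) X \<le> ennreal (C * q ^ n)"
    using G.L1_limit_of_iterates[OF X0] by blast
  have "W1 ((\<Psi> ^^ n) \<gamma>) (G.law X) \<le> C * q ^ n" for n
  proof -
    have "ennreal (W1 ((\<Psi> ^^ n) \<gamma>) (G.law X)) = ennreal (W1 (G.law ((G.T ^^ n) fst)) (G.law X))"
      by (simp add: G.law_funpow[OF X0] law_X0)
    also have "\<dots> \<le> G.dist_L1 ((G.T ^^ n) fst) X"
      by (intro G.W1_law_le_dist_L1 G.L1_rv_measurable G.L1_rv_funpow X0 X)
    also have "\<dots> \<le> ennreal (C * q ^ n)"
      by (rule bound)
    finally show ?thesis
      using \<open>C \<ge> 0\<close> q_nonneg by (simp add: ennreal_le_iff)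
  qed
  then show ?thesis
    using G.invariant_law_of_limit[OF X0 X \<open>C \<ge> 0\<close> bound] G.law_in_P1[OF X] \<open>C \<ge> 0\<close> by blast
qed

lemma fixed_point_unique:
  assumes \<mu>: "\<mu> \<in> P1" "\<Psi> \<mu> = \<mu>" and \<nu>: "\<nu> \<in> P1" "\<Psi> \<nu> = \<nu>"
  shows "\<mu> = \<nu>"
proof -
  interpret M: prob_space \<mu> using P1D(1)[OF \<mu>(1)] .
  interpret N: prob_space \<nu> using P1D(1)[OF \<nu>(1)] .
  interpret MN: pair_prob_space \<mu> \<nu> ..
  interpret G: mean_field_path_space A \<delta> \<theta> f "\<mu> \<Otimes>\<^sub>M \<nu>"
    using mean_field_map_axioms MN.prob_space_axioms
    by (simp add: mean_field_path_space_def mean_field_path_space_axioms_def)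
  have [measurable_cong]: "sets \<mu> = sets borel" "sets \<nu> = sets borel"
    using P1D(2) \<mu>(1) \<nu>(1) by auto
  have laws: "G.law (\<lambda>\<omega>. fst (fst \<omega>)) = \<mu>" "G.law (\<lambda>\<omega>. snd (fst \<omega>)) = \<nu>"
    using G.law_comp_fst[of fst] G.law_comp_fst[of snd]
    by (simp_all add: P1_distr_pair_fst P1_distr_pair_snd \<mu>(1) \<nu>(1))
  have "G.L1_rv (\<lambda>\<omega>. fst (fst \<omega>))" "G.L1_rv (\<lambda>\<omega>. snd (fst \<omega>))"
    by (subst G.L1_rv_iff_law_in_P1; simp add: laws \<mu>(1) \<nu>(1))+
  from G.invariant_laws_eq[OF this] show ?thesis
    using laws \<mu>(2) \<nu>(2) by simp
qed

lemma limsup_log_rate_W1_neg: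
  assumes \<mu>: "\<mu> \<in> P1" "\<Psi> \<mu> = \<mu>" and \<gamma>: "\<gamma> \<in> P1"
  shows "limsup (\<lambda>n. log_rate (W1 ((\<Psi> ^^ n) \<gamma>) \<mu>) n) < 0"
proof -
  obtain \<mu>' C where "\<mu>' \<in> P1" "\<Psi> \<mu>' = \<mu>'" "C \<ge> 0" and bound: "\<And>n. W1 ((\<Psi> ^^ n) \<gamma>) \<mu>' \<le> C * q ^ n"
    using geometric_convergence[OF \<gamma>] by blast
  then have "\<mu>' = \<mu>" using fixed_point_unique \<mu> by blast
  then show ?thesis
    using limsup_log_rate_neg[OF W1_nonneg bound q_nonneg q_less_1 \<open>C \<ge> 0\<close>] by simp
qed

end

theorem theorem3p3:
  fixes A :: "real^'d^'d" and \<delta> \<omega> :: real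
    and \<theta> :: "(real^'m) measure"
    and f :: "real^'d \<Rightarrow> (real^'d) measure \<Rightarrow> real^'m \<Rightarrow> real^'d"
  assumes theta: "prob_space \<theta>" "sets \<theta> = sets borel"
    and f_meas: "\<And>\<mu>. \<mu> \<in> P1 \<Longrightarrow>
       (\<lambda>(x, z). f x \<mu> z) \<in> borel_measurable (borel \<Otimes>\<^sub>M borel)"
    and D_meas: "Dlip f \<in> borel_measurable \<theta>"
    and A1: "(\<integral>\<^sup>+ z. Dlip f z \<partial>\<theta>) < \<infinity>"
    and A2: "(\<integral>\<^sup>+ z. ennreal (norm (f 0 (return borel 0) z)) \<partial>\<theta>) < \<infinity>"
    and A3: "\<omega> > 0" "onorm (\<lambda>x. A *v x) \<le> exp (- \<omega>)"
    and delta: "\<delta> > 0" "\<delta> * (2 * enn2real (\<integral>\<^sup>+ z. Dlip f z \<partial>\<theta>)) < 1 - exp (- \<omega>)"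
  shows "\<exists>!\<mu>inf. \<mu>inf \<in> P1 \<and> Psi A \<delta> f \<theta> \<mu>inf = \<mu>inf
         \<and> (\<forall>\<gamma>\<in>P1. limsup (\<lambda>n. log_rate (W1 ((Psi A \<delta> f \<theta> ^^ n) \<gamma>) \<mu>inf) n) < 0)"
proof -
  have "onorm (\<lambda>x. A *v x) + 2 * \<delta> * enn2real (\<integral>\<^sup>+ z. Dlip f z \<partial>\<theta>) < 1"
    using A3(2) delta(2) by (simp add: mult.assoc mult.left_commute)
  then interpret mean_field_map A \<delta> \<theta> f
    using theta f_meas D_meas A1 A2 delta(1) by (intro mean_field_map.intro) auto
  obtain \<mu> where "\<mu> \<in> P1" "\<Psi> \<mu> = \<mu>"
    using geometric_convergence[OF return_0_in_P1] by blast
  then show ?thesis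
    using fixed_point_unique limsup_log_rate_W1_neg by (intro ex1I[of _ \<mu>]) blast+
qed

end
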